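(* Let $p$ be a positive integer, $H$ a graph, $T$ a complete rooted ternary tree and $V\subseteq V(T(H))$. Let $T_1,\dots,T_q$ be a minimal sequence of largest subtrees of $T$ with respect to $V$ lacking $p$, with corresponding sequence of sets $V_1,\dots,V_q$. Then $|OC(T_q,V_q)|\geq (|OC(T_1,V_1)|-p)/3$.
   Context: Complete rooted ternary tree: rooted tree, all root-leaf paths of equal length, every non-leaf vertex has exactly 3 children. Graph $T(H)$: for $V(H)=\{1,\dots,m\}$, vertices $v^i$ ($v\in V(T)$), each $\{v^1,\dots,v^m\}$ spanning a copy $H^v$ of $H$, plus edges $u^iv^i$ for $uv\in E(T)$; for a subtree $T'$, $T'(H)$ is the subgraph induced by the copies $H^v$, $v\in V(T')$. $OC(T,V)=\{u\in V(T): V(H^u)\cap V\neq\emptyset\}$. An immediate subtree of $T$ consists of a child of the root and all its descendants; it is largest w.r.t. $V$ if $|OC(T,V)\cap V(T')|$ is maximum among immediate subtrees. A sequence of largest subtrees: $T_1=T$, $V_1=V$, $T_{i+1}$ a largest immediate subtree of $T_i$ w.r.t. $V_i$, $V_{i+1}=V_i\cap V(T_{i+1}(H))$; $V_1,\dots,V_q$ is the corresponding sequence of sets. It is minimal lacking $p$ if $|OC(T_1,V_1)|-|OC(T_q,V_q)|\geq p$ and $|OC(T_1,V_1)|-|OC(T_{q-1},V_{q-1})|<p$. *)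

theory Defs
  imports Complex_Main
begin

text \<open>Complete rooted ternary tree of depth d: vertices are words over {0,1,2}
 of length at most d; the root is the empty word, the children of v are v@[c], c<3.\<close>

definition tern_verts :: "nat \<Rightarrow> nat list set" where
  "tern_verts d = {v. length v \<le> d \<and> set v \<subseteq> {0,1,2}}"

definition subtree_verts :: "nat \<Rightarrow> nat list \<Rightarrow> nat list set" where
  "subtree_verts d r = {v \<in> tern_verts d. \<exists>w. v = r @ w}"

definition is_graph_on :: "nat \<Rightarrow> (nat \<Rightarrow> nat \<Rightarrow> bool) \<Rightarrow> bool" where
  "is_graph_on m E \<longleftrightarrow> (\<forall>x y. E x y \<longrightarrow> x \<in> {1..m} \<and> y \<in> {1..m} \<and> x \<noteq> y \<and> E y x)"

text \<open>Vertex set of T'(H) for a subtree T' with vertex set S: vertex v^i is the pair (v,i).\<close>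
definition blowup_verts :: "nat list set \<Rightarrow> nat \<Rightarrow> (nat list \<times> nat) set" where
  "blowup_verts S m = S \<times> {1..m}"

definition OC :: "nat \<Rightarrow> nat list set \<Rightarrow> (nat list \<times> nat) set \<Rightarrow> nat list set" where
  "OC m S V = {u \<in> S. ({u} \<times> {1..m}) \<inter> V \<noteq> {}}"

text \<open>r 1, ..., r q are the roots of T_1, ..., T_q; Vs 1, ..., Vs q are V_1, ..., V_q.\<close>
definition largest_seq ::
  "nat \<Rightarrow> nat \<Rightarrow> (nat list \<times> nat) set \<Rightarrow> nat \<Rightarrow> (nat \<Rightarrow> nat list) \<Rightarrow> (nat \<Rightarrow> (nat list \<times> nat) set) \<Rightarrow> bool" where
  "largest_seq d m V q r Vs \<longleftrightarrow>
     q \<ge> 1 \<and> r 1 = [] \<and> Vs 1 = V \<and>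
     (\<forall>i. 1 \<le> i \<and> i < q \<longrightarrow>
        length (r i) < d \<and>
        (\<exists>c<3. r (Suc i) = r i @ [c]) \<and>
        (\<forall>c<3. card (OC m (subtree_verts d (r i)) (Vs i) \<inter> subtree_verts d (r i @ [c]))
               \<le> card (OC m (subtree_verts d (r i)) (Vs i) \<inter> subtree_verts d (r (Suc i)))) \<and>
        Vs (Suc i) = Vs i \<inter> blowup_verts (subtree_verts d (r (Suc i))) m)"

definition minimal_lacking ::
  "nat \<Rightarrow> nat \<Rightarrow> nat \<Rightarrow> nat \<Rightarrow> (nat \<Rightarrow> nat list) \<Rightarrow> (nat \<Rightarrow> (nat list \<times> nat) set) \<Rightarrow> bool" where
  "minimal_lacking p d m q r Vs \<longleftrightarrow>
     int (card (OC m (subtree_verts d (r 1)) (Vs 1))) - int (card (OC m (subtree_verts d (r q)) (Vs q))) \<ge> int p \<and>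
     int (card (OC m (subtree_verts d (r 1)) (Vs 1))) - int (card (OC m (subtree_verts d (r (q - 1))) (Vs (q - 1)))) < int p"

end

theory Submission
  imports Defs
begin

text \<open>Every occupied vertex of a subtree other than its root lies in one of its three
  immediate subtrees, so passing to a largest immediate subtree loses at most the root and
  keeps at least a third of the rest: |OC(T_i,V_i)| \<le> 1 + 3 |OC(T_{i+1},V_{i+1})|.
  Minimality of the lacking sequence (with p > 0, which forces q \<ge> 2) gives
  |OC(T_1,V_1)| - |OC(T_{q-1},V_{q-1})| \<le> p - 1; combine the two at i = q - 1.\<close>

lemma finite_tern_verts: "finite (tern_verts d)"
proof -
  have "tern_verts d = {xs. set xs \<subseteq> {0,1,2} \<and> length xs \<le> d}"
    unfolding tern_verts_def by auto
  then show ?thesis using finite_lists_length_le[of "{0::nat,1,2}" d] by simp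
qed

lemma finite_OC_subtree_verts: "finite (OC m (subtree_verts d r) W)"
  using finite_tern_verts[of d] unfolding OC_def subtree_verts_def
  by (auto intro: finite_subset)

lemma subtree_verts_subset_children:
  "subtree_verts d r \<subseteq> {r} \<union> (\<Union>c<3. subtree_verts d (r @ [c]))"
proof
  fix v assume "v \<in> subtree_verts d r"
  then obtain w where v: "v = r @ w" "v \<in> tern_verts d"
    unfolding subtree_verts_def by auto
  show "v \<in> {r} \<union> (\<Union>c<3. subtree_verts d (r @ [c]))"
  proof (cases w)
    case Nil then show ?thesis using v by simp
  next
    case (Cons c w')
    then have "c < 3" using v unfolding tern_verts_def by auto
    then show ?thesis using v Cons unfolding subtree_verts_def by auto
  qed
qed

lemma OC_Int_subset:
  assumes "S' \<subseteq> S"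
  shows "OC m S W \<inter> S' = OC m S' (W \<inter> blowup_verts S' m)"
  using assms unfolding OC_def blowup_verts_def by auto

lemma subtree_verts_child_subset: "subtree_verts d (r @ [c]) \<subseteq> subtree_verts d r"
  unfolding subtree_verts_def by auto

lemma card_OC_le_children:
  "card (OC m (subtree_verts d r) W)
     \<le> 1 + (\<Sum>c<3. card (OC m (subtree_verts d r) W \<inter> subtree_verts d (r @ [c])))"
proof -
  let ?O = "OC m (subtree_verts d r) W"
  have "?O \<subseteq> {r} \<union> (\<Union>c<3. ?O \<inter> subtree_verts d (r @ [c]))"
    using subtree_verts_subset_children[of d r] unfolding OC_def by blast
  then have "card ?O \<le> card ({r} \<union> (\<Union>c<3. ?O \<inter> subtree_verts d (r @ [c])))"
    using finite_OC_subtree_verts by (intro card_mono) auto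
  also have "\<dots> \<le> 1 + card (\<Union>c<3. ?O \<inter> subtree_verts d (r @ [c]))"
    using card_Un_le[of "{r}"] by simp
  also have "\<dots> \<le> 1 + (\<Sum>c<3. card (?O \<inter> subtree_verts d (r @ [c])))"
    by (simp only: add_le_cancel_left card_UN_le[OF finite_lessThan])
  finally show ?thesis .
qed

lemma card_OC_le_largest_child:
  assumes largest: "\<forall>c<3. card (OC m (subtree_verts d r) W \<inter> subtree_verts d (r @ [c]))
                      \<le> card (OC m (subtree_verts d r) W \<inter> subtree_verts d (r @ [c\<^sub>0]))"
  shows "card (OC m (subtree_verts d r) W)
           \<le> 1 + 3 * card (OC m (subtree_verts d (r @ [c\<^sub>0]))
                             (W \<inter> blowup_verts (subtree_verts d (r @ [c\<^sub>0])) m))"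
proof -
  let ?k = "card (OC m (subtree_verts d r) W \<inter> subtree_verts d (r @ [c\<^sub>0]))"
  have "(\<Sum>c<3. card (OC m (subtree_verts d r) W \<inter> subtree_verts d (r @ [c]))) \<le> 3 * ?k"
    using sum_bounded_above[of "{..<3::nat}" _ ?k] largest by simp
  then have "card (OC m (subtree_verts d r) W) \<le> 1 + 3 * ?k"
    using card_OC_le_children[of m d r W] by linarith
  then show ?thesis
    using OC_Int_subset[OF subtree_verts_child_subset] by simp
qed

lemma largest_seq_step:
  assumes "largest_seq d m V q r Vs" and "1 \<le> i" and "i < q"
  shows "card (OC m (subtree_verts d (r i)) (Vs i))
           \<le> 1 + 3 * card (OC m (subtree_verts d (r (Suc i))) (Vs (Suc i)))"
proof -
  from assms obtain c where c: "r (Suc i) = r i @ [c]"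
    and largest: "\<forall>c<3. card (OC m (subtree_verts d (r i)) (Vs i) \<inter> subtree_verts d (r i @ [c]))
               \<le> card (OC m (subtree_verts d (r i)) (Vs i) \<inter> subtree_verts d (r (Suc i)))"
    and restrict: "Vs (Suc i) = Vs i \<inter> blowup_verts (subtree_verts d (r (Suc i))) m"
    unfolding largest_seq_def by blast
  show ?thesis
    using card_OC_le_largest_child[of m d "r i" "Vs i" c] largest c restrict by simp
qed

theorem lemma5:
  fixes p d m q :: nat and E :: "nat \<Rightarrow> nat \<Rightarrow> bool"
    and V :: "(nat list \<times> nat) set"
    and r :: "nat \<Rightarrow> nat list" and Vs :: "nat \<Rightarrow> (nat list \<times> nat) set"
  assumes "p > 0"
    and "is_graph_on m E"
    and "V \<subseteq> blowup_verts (tern_verts d) m"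
    and "largest_seq d m V q r Vs"
    and "minimal_lacking p d m q r Vs"
  shows "real (card (OC m (subtree_verts d (r q)) (Vs q)))
           \<ge> (real (card (OC m (subtree_verts d (r 1)) (Vs 1))) - real p) / 3"
proof -
  have "q \<noteq> 1"
    using assms(1,5) unfolding minimal_lacking_def by auto
  moreover have "q \<ge> 1"
    using assms(4) unfolding largest_seq_def by blast
  ultimately have q: "1 \<le> q - 1" "q - 1 < q" "Suc (q - 1) = q" by auto
  have "card (OC m (subtree_verts d (r (q - 1))) (Vs (q - 1)))
          \<le> 1 + 3 * card (OC m (subtree_verts d (r q)) (Vs q))"
    using largest_seq_step[OF assms(4) q(1,2)] q(3) by simp
  moreover have "int (card (OC m (subtree_verts d (r 1)) (Vs 1)))
                   - int (card (OC m (subtree_verts d (r (q - 1))) (Vs (q - 1)))) < int p"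
    using assms(5) unfolding minimal_lacking_def by blast
  ultimately have "int (card (OC m (subtree_verts d (r 1)) (Vs 1))) - int p
                     \<le> 3 * int (card (OC m (subtree_verts d (r q)) (Vs q)))"
    by linarith
  then have "real_of_int (int (card (OC m (subtree_verts d (r 1)) (Vs 1))) - int p)
               \<le> real_of_int (3 * int (card (OC m (subtree_verts d (r q)) (Vs q))))"
    by (simp only: of_int_le_iff)
  then show ?thesis by simp
qed

end
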